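(* Let $D$ be the diamond graph with $V=\{1,2,3,4\}$ and $E=\{\{1,2\},\{1,3\},\{2,3\},\{2,4\},\{3,4\}\}$, and let $\mathcal{Q}_{\mathrm{Gre}}(D)=\{q\in\mathbb{N}^4:q_iq_j=0\text{ for all }\{i,j\}\in E\}$. For $q=(q_1,q_2,q_3,q_4)$ let $\langle q\rangle=(q_1+q_4,q_2,q_3)$, and let $\langle i\rangle=i$ for $i\in\{1,2,3,\bot\}$ and $\langle4\rangle=1$. Let $\Phi_{\mathrm{Gre}}(K_3)$ be the deterministic size-based policy on the complete graph $K_3$ with nodes $\{1,2,3\}$ given by $\Phi_{\mathrm{Gre}}(K_3)(q,i)=j$ if $q_j\ge1$ for some $j\ne i$ and $\bot$ otherwise. Every greedy policy $\Phi$ adapted to $D$ satisfies: (i) if $\Phi$ is deterministic size-based, then $\langle\Phi(q,i)\rangle=\Phi_{\mathrm{Gre}}(K_3)(\langle q\rangle,\langle i\rangle)$ for all $(q,i)\in\mathcal{Q}_{\mathrm{Gre}}(D)\times V$; (ii) in general, if $\Phi$ has state space $(\mathcal{S},|\cdot|)$, then $\sum_{s'\in\mathcal{S}}\sum_{j\in V\cup\{\bot\}:\ \langle j\rangle=\Phi_{\mathrm{Gre}}(K_3)(\langle|s|\rangle,\langle i\rangle)}\Phi(s,i,j,s')=1$ for all $s\in\mathcal{S}$, $i\in V$; (iii) for every sequence $I=(I_t)$ of item classes, $\langle Q_t\rangle=(Q_{\mathrm{Gre}})_t$ for all $t\in\mathbb{N}$, where $Q$ and $Q_{\mathrm{Gre}}$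 are the queue-size processes of the models $(D,I,\Phi)$ and $(K_3,\langle I\rangle,\Phi_{\mathrm{Gre}}(K_3))$, with $\langle I\rangle=(\langle I_t\rangle)_t$.
   Context: Matching dynamics: items of classes $I_0,I_1,\dots$ arrive one at a time; a class-$i$ item can be matched with an unmatched class-$j$ item iff $\{i,j\}$ is an edge; matched items leave; the system starts empty. A (general) policy adapted to a graph: countable state space $\mathcal{S}$, map $|\cdot|:\mathcal{S}\to\mathbb{N}^n$ (unmatched items per class) with unique empty state $\varnothing$, and $\Phi(s,i,j,s')\in[0,1]$, the probability that an arriving class-$i$ item finding state $s$ is matched with class $j$ ($j=\bot$: left unmatched) and the new state is $s'$; $\Phi(s,i,j,s')>0$ only if $j\in\{j'\in V_i:|s|_{j'}\ge1\}\cup\{\bot\}$ ($V_i$ the neighbours of $i$) and $|s'|=|s|+\mathbf{1}_i$ if $j=\bot$, $|s|-\mathbf{1}_j$ otherwise; irreducible state chain from $\varnothing$. Deterministic size-based: $\mathcal{S}\subseteq\mathbb{N}^n$, $|\cdot|$ the identity, and the decision is a function $\Phi(q,i)\in V\cup\{\bot\}$. Greedy: no arriving item is left unmatched while a compatible item is waiting (so queue-size vectors lie in $\mathcal{Q}_{\mathrm{Gre}}$). Queue-size process: $Q_t=|S_t|$ after the first $t$ arrivals. *)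

theory Defs
  imports "HOL-Analysis.Analysis"
begin

text \<open>Item classes are natural numbers; the "unmatched" outcome \<bottom> is None,
  a match with class j is Some j. Queue-size vectors in N^n are functions nat => nat
  (coordinates outside the vertex set are 0).\<close>

definition upd_size :: "(nat \<Rightarrow> nat) \<Rightarrow> nat \<Rightarrow> nat option \<Rightarrow> (nat \<Rightarrow> nat)" where
  "upd_size q i j = (case j of None \<Rightarrow> q(i := q i + 1) | Some k \<Rightarrow> q(k := q k - 1))"

definition step_rel :: "nat set \<Rightarrow> 's set \<Rightarrow> ('s \<Rightarrow> nat \<Rightarrow> nat option \<Rightarrow> 's \<Rightarrow> real) \<Rightarrow> ('s \<times> 's) set" where
  "step_rel V S \<Phi> = {(s, s'). s \<in> S \<and> s' \<in> S \<and> (\<exists>i\<in>V. \<exists>j. \<Phi> s i j s' > 0)}"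

definition adapted_policy ::
  "nat set \<Rightarrow> nat set set \<Rightarrow> 's set \<Rightarrow> ('s \<Rightarrow> nat \<Rightarrow> nat) \<Rightarrow> 's \<Rightarrow>
   ('s \<Rightarrow> nat \<Rightarrow> nat option \<Rightarrow> 's \<Rightarrow> real) \<Rightarrow> bool" where
  "adapted_policy V E S sz e \<Phi> \<longleftrightarrow>
     countable S \<and> e \<in> S \<and>
     (\<forall>s\<in>S. \<forall>k. k \<notin> V \<longrightarrow> sz s k = 0) \<and>
     (\<forall>s\<in>S. sz s = (\<lambda>_. 0) \<longleftrightarrow> s = e) \<and>
     (\<forall>s\<in>S. \<forall>i\<in>V. \<forall>j s'. 0 \<le> \<Phi> s i j s' \<and> \<Phi> s i j s' \<le> 1) \<and>
     (\<forall>s\<in>S. \<forall>i\<in>V. \<forall>j s'. \<Phi> s i j s' > 0 \<longrightarrow>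
          s' \<in> S \<and>
          (j = None \<or> (\<exists>k. j = Some k \<and> {i, k} \<in> E \<and> sz s k \<ge> 1)) \<and>
          sz s' = upd_size (sz s) i j) \<and>
     (\<forall>s\<in>S. \<forall>i\<in>V.
          ((\<lambda>(j, s'). \<Phi> s i j s') has_sum 1) ((insert None (Some ` V)) \<times> S)) \<and>
     (\<forall>s\<in>S. \<forall>s'\<in>S. (s, s') \<in> (step_rel V S \<Phi>)\<^sup>*)"

definition greedy_policy ::
  "nat set \<Rightarrow> nat set set \<Rightarrow> 's set \<Rightarrow> ('s \<Rightarrow> nat \<Rightarrow> nat) \<Rightarrow>
   ('s \<Rightarrow> nat \<Rightarrow> nat option \<Rightarrow> 's \<Rightarrow> real) \<Rightarrow> bool" where
  "greedy_policy V E S sz \<Phi> \<longleftrightarrow>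
     (\<forall>s\<in>S. \<forall>i\<in>V. \<forall>s'. \<Phi> s i None s' > 0 \<longrightarrow> (\<forall>k. {i, k} \<in> E \<longrightarrow> sz s k = 0))"

definition det_kernel ::
  "((nat \<Rightarrow> nat) \<Rightarrow> nat \<Rightarrow> nat option) \<Rightarrow>
   (nat \<Rightarrow> nat) \<Rightarrow> nat \<Rightarrow> nat option \<Rightarrow> (nat \<Rightarrow> nat) \<Rightarrow> real" where
  "det_kernel \<phi> q i j q' = (if j = \<phi> q i \<and> q' = upd_size q i j then 1 else 0)"

definition Q_gre :: "nat set \<Rightarrow> nat set set \<Rightarrow> (nat \<Rightarrow> nat) set" where
  "Q_gre V E = {q. (\<forall>k. k \<notin> V \<longrightarrow> q k = 0) \<and> (\<forall>i j. {i, j} \<in> E \<longrightarrow> q i * q j = 0)}"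

definition diamond_V :: "nat set" where "diamond_V = {1, 2, 3, 4}"

definition diamond_E :: "nat set set" where
  "diamond_E = {{1, 2}, {1, 3}, {2, 3}, {2, 4}, {3, 4}}"

definition proj_cls :: "nat \<Rightarrow> nat" where "proj_cls i = (if i = 4 then 1 else i)"

definition proj_opt :: "nat option \<Rightarrow> nat option" where "proj_opt j = map_option proj_cls j"

definition proj_q :: "(nat \<Rightarrow> nat) \<Rightarrow> (nat \<Rightarrow> nat)" where
  "proj_q q = (\<lambda>k. if k = 1 then q 1 + q 4 else if k = 2 \<or> k = 3 then q k else 0)"

text \<open>On greedy states of K3 at most one coordinate is nonzero, so such j is unique there;
  as a total function we pick the least one.\<close>
definition phi_gre_K3 :: "(nat \<Rightarrow> nat) \<Rightarrow> nat \<Rightarrow> nat option" where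
  "phi_gre_K3 q i =
     (if \<exists>j\<in>{1, 2, 3}. j \<noteq> i \<and> q j \<ge> 1
      then Some (LEAST j. j \<in> {1, 2, 3} \<and> j \<noteq> i \<and> q j \<ge> 1) else None)"

fun queue_gre_K3 :: "(nat \<Rightarrow> nat) \<Rightarrow> nat \<Rightarrow> (nat \<Rightarrow> nat)" where
  "queue_gre_K3 I 0 = (\<lambda>_. 0)"
| "queue_gre_K3 I (Suc t) =
     upd_size (queue_gre_K3 I t) (I t) (phi_gre_K3 (queue_gre_K3 I t) (I t))"

end

theory Submission
  imports Defs
begin

text \<open>Classes 1 and 4 of the diamond have the same neighbourhood {2, 3}, so merging them
  turns the diamond into K3. Under a greedy policy the queue vector stays in Q_Gre(D), where
  at most one of the groups {1, 4}, {2}, {3} is nonempty; hence every greedy decision in D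
  projects onto the unique greedy decision in K3, and projection commutes with the update of
  the queue sizes. For (i) one also needs that a deterministic greedy policy visits every
  q in Q_Gre(D): removing one item of a nonempty class k gives a smaller greedy state, from
  which a k-arrival finds no compatible item and restores q.\<close>

definition greedy_match :: "nat set set \<Rightarrow> (nat \<Rightarrow> nat) \<Rightarrow> nat \<Rightarrow> nat option \<Rightarrow> bool" where
  "greedy_match E q i j \<longleftrightarrow>
     (case j of None \<Rightarrow> \<forall>k. {i, k} \<in> E \<longrightarrow> q k = 0 | Some k \<Rightarrow> {i, k} \<in> E \<and> 1 \<le> q k)"

lemma adapted_greedy_policy_step:
  assumes "adapted_policy V E S sz e \<Phi>" and "greedy_policy V E S sz \<Phi>"
    and "s \<in> S" and "i \<in> V" and "\<Phi> s i j s' > 0"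
  shows "s' \<in> S \<and> greedy_match E (sz s) i j \<and> sz s' = upd_size (sz s) i j"
  using assms unfolding adapted_policy_def greedy_policy_def greedy_match_def
  by (cases j) fastforce+

lemma Q_gre_downward_closed:
  assumes "q \<in> Q_gre V E" and "\<And>k. p k \<le> q k"
  shows "p \<in> Q_gre V E"
proof -
  have "p a = 0" if "q a = 0" for a using assms(2)[of a] that by simp
  then show ?thesis using assms(1) unfolding Q_gre_def by fastforce
qed

lemma upd_size_greedy_match_Q_gre:
  assumes loop_free: "\<And>k. {k} \<notin> E"
    and "q \<in> Q_gre V E" and "i \<in> V" and "greedy_match E q i j"
  shows "upd_size q i j \<in> Q_gre V E"
proof (cases j)
  case None
  then show ?thesis
    using assms unfolding Q_gre_def greedy_match_def upd_size_def
    by (auto simp: insert_commute)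
next
  case (Some k)
  then show ?thesis
    using assms(2) by (auto simp: upd_size_def intro: Q_gre_downward_closed)
qed

lemma adapted_greedy_policy_sizes_Q_gre:
  assumes adapted: "adapted_policy V E S sz e \<Phi>" and greedy: "greedy_policy V E S sz \<Phi>"
    and loop_free: "\<And>k. {k} \<notin> E" and "s \<in> S"
  shows "sz s \<in> Q_gre V E"
proof -
  have "e \<in> S" and "sz e = (\<lambda>_. 0)" and "(e, s) \<in> (step_rel V S \<Phi>)\<^sup>*"
    using adapted \<open>s \<in> S\<close> unfolding adapted_policy_def by blast+
  from \<open>(e, s) \<in> _\<close> show ?thesis
  proof (induction rule: rtrancl_induct)
    case base
    show ?case using \<open>sz e = (\<lambda>_. 0)\<close> by (simp add: Q_gre_def)
  next
    case (step y z)
    then obtain i j where "y \<in> S" "i \<in> V" "\<Phi> y i j z > 0"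
      unfolding step_rel_def by blast
    with adapted_greedy_policy_step[OF adapted greedy] step.IH show ?case
      by (metis upd_size_greedy_match_Q_gre loop_free)
  qed
qed

lemma det_greedy_policy_step:
  assumes "adapted_policy V E Sd id (\<lambda>_. 0) (det_kernel \<phi>)"
    and "greedy_policy V E Sd id (det_kernel \<phi>)" and "q \<in> Sd" and "i \<in> V"
  shows "upd_size q i (\<phi> q i) \<in> Sd \<and> greedy_match E q i (\<phi> q i)"
  using adapted_greedy_policy_step[OF assms, of "\<phi> q i" "upd_size q i (\<phi> q i)"]
  by (simp add: det_kernel_def)

lemma Q_gre_subset_det_greedy_states:
  assumes adapted: "adapted_policy V E Sd id (\<lambda>_. 0) (det_kernel \<phi>)"
    and greedy: "greedy_policy V E Sd id (det_kernel \<phi>)"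
    and loop_free: "\<And>k. {k} \<notin> E" and "finite V"
  shows "Q_gre V E \<subseteq> Sd"
proof
  fix q assume "q \<in> Q_gre V E"
  then show "q \<in> Sd"
  proof (induction "sum q V" arbitrary: q)
    case 0
    with \<open>finite V\<close> have "q = (\<lambda>_. 0)" by (auto simp: Q_gre_def)
    then show ?case using adapted by (simp add: adapted_policy_def)
  next
    case (Suc n)
    then obtain k where k: "k \<in> V" "1 \<le> q k"
      by (metis One_nat_def Suc_le_eq sum_eq_0_iff \<open>finite V\<close> nat.distinct(1) not_gr0)
    define q' where "q' = q(k := q k - 1)"
    have "q' \<in> Q_gre V E" using Suc.prems by (auto simp: q'_def intro: Q_gre_downward_closed)
    moreover have "sum q' V = n"
      using Suc.hyps(2) k \<open>finite V\<close> by (simp add: q'_def sum.remove)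
    ultimately have "q' \<in> Sd" using Suc.hyps(1) by blast
    from det_greedy_policy_step[OF adapted greedy this k(1)]
    have "upd_size q' k (\<phi> q' k) \<in> Sd" and "greedy_match E q' k (\<phi> q' k)" by auto
    moreover have "\<phi> q' k = None"
    proof (rule ccontr)
      assume "\<phi> q' k \<noteq> None"
      then obtain m where "\<phi> q' k = Some m" "{k, m} \<in> E" "1 \<le> q' m"
        using \<open>greedy_match E q' k (\<phi> q' k)\<close> by (auto simp: greedy_match_def)
      moreover have "m \<noteq> k" using \<open>{k, m} \<in> E\<close> loop_free by auto
      ultimately show False using Suc.prems k unfolding Q_gre_def q'_def by fastforce
    qed
    moreover have "upd_size q' k None = q" using k by (auto simp: q'_def upd_size_def)
    ultimately show ?case by simp
  qed
qed

lemma adapted_policy_infsum_restricted: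
  assumes adapted: "adapted_policy V E S sz e \<Phi>" and "finite V"
    and "s \<in> S" and "i \<in> V"
    and vanish: "\<And>j s'. \<not> P j \<Longrightarrow> \<Phi> s i j s' = 0"
  shows "infsum (\<lambda>s'. \<Sum>j\<in>{j \<in> insert None (Some ` V). P j}. \<Phi> s i j s') S = 1"
proof -
  define J where "J = insert None (Some ` V)"
  have "finite J" using \<open>finite V\<close> by (simp add: J_def)
  have "((\<lambda>(j, s'). \<Phi> s i j s') has_sum 1) (J \<times> S)"
    using adapted \<open>s \<in> S\<close> \<open>i \<in> V\<close> unfolding adapted_policy_def J_def by blast
  then have "((\<lambda>(s', j). \<Phi> s i j s') has_sum 1) (S \<times> J)"
    by (subst (asm) has_sum_swap) (simp add: case_prod_unfold)
  then have "((\<lambda>s'. \<Sum>j\<in>J. \<Phi> s i j s') has_sum 1) S"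
    by (rule has_sum_SigmaD) (use \<open>finite J\<close> in simp)
  moreover have "(\<Sum>j\<in>{j \<in> J. P j}. \<Phi> s i j s') = (\<Sum>j\<in>J. \<Phi> s i j s')" for s'
    by (rule sum.mono_neutral_left) (use \<open>finite J\<close> vanish in auto)
  ultimately show ?thesis unfolding J_def by (simp add: infsumI)
qed

lemma phi_gre_K3_None:
  assumes "\<And>k. k \<in> {1, 2, 3} \<Longrightarrow> k \<noteq> i \<Longrightarrow> p k = 0"
  shows "phi_gre_K3 p i = None"
  using assms by (auto simp: phi_gre_K3_def)

lemma phi_gre_K3_Some:
  assumes "j \<in> {1, 2, 3}" "j \<noteq> i" "1 \<le> p j"
    and "\<And>k. k \<in> {1, 2, 3} \<Longrightarrow> k \<noteq> i \<Longrightarrow> k \<noteq> j \<Longrightarrow> p k = 0"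
  shows "phi_gre_K3 p i = Some j"
proof -
  have "(LEAST k. k \<in> {1, 2, 3} \<and> k \<noteq> i \<and> 1 \<le> p k) = j"
    by (rule Least_equality) (use assms in fastforce)+
  then show ?thesis using assms(1-3) by (auto simp: phi_gre_K3_def)
qed

lemma diamond_edge_iff:
  "{i, k} \<in> diamond_E \<longleftrightarrow>
     (i, k) \<in> {(1, 2), (2, 1), (1, 3), (3, 1), (2, 3), (3, 2), (2, 4), (4, 2), (3, 4), (4, 3)}"
  unfolding diamond_E_def by (auto simp: doubleton_eq_iff)

lemma diamond_loop_free: "{k} \<notin> diamond_E"
  using diamond_edge_iff[of k k] by auto

lemma diamond_Q_gre_iff:
  "q \<in> Q_gre diamond_V diamond_E \<longleftrightarrow>
     (\<forall>k. k \<notin> {1, 2, 3, 4} \<longrightarrow> q k = 0) \<and>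
     (q 1 = 0 \<or> q 2 = 0) \<and> (q 1 = 0 \<or> q 3 = 0) \<and> (q 2 = 0 \<or> q 3 = 0) \<and>
     (q 2 = 0 \<or> q 4 = 0) \<and> (q 3 = 0 \<or> q 4 = 0)"
  unfolding Q_gre_def diamond_V_def diamond_edge_iff by auto

lemma diamond_greedy_match_proj:
  assumes "q \<in> Q_gre diamond_V diamond_E" and "i \<in> diamond_V"
    and "greedy_match diamond_E q i j"
  shows "proj_opt j = phi_gre_K3 (proj_q q) (proj_cls i)"
proof (cases j)
  case None
  then have nbr: "q k = 0" if "{i, k} \<in> diamond_E" for k
    using assms(3) that by (simp add: greedy_match_def)
  from assms(2) have "phi_gre_K3 (proj_q q) (proj_cls i) = None"
    unfolding diamond_V_def
    by (intro phi_gre_K3_None)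
      (auto simp: proj_q_def proj_cls_def diamond_edge_iff intro!: nbr)
  then show ?thesis using None by (simp add: proj_opt_def)
next
  case (Some k)
  then have "{i, k} \<in> diamond_E" "1 \<le> q k"
    using assms(3) by (auto simp: greedy_match_def)
  then have "phi_gre_K3 (proj_q q) (proj_cls i) = Some (proj_cls k)"
    using assms(1) unfolding diamond_edge_iff diamond_Q_gre_iff
    by (elim insertE emptyE) (auto intro!: phi_gre_K3_Some simp: proj_q_def proj_cls_def)
  then show ?thesis using Some by (simp add: proj_opt_def)
qed

lemma proj_q_upd_size:
  assumes "i \<in> diamond_V" and "\<And>k. j = Some k \<Longrightarrow> 1 \<le> q k"
  shows "proj_q (upd_size q i j) = upd_size (proj_q q) (proj_cls i) (proj_opt j)"
  using assms
  by (cases j) (auto simp: diamond_V_def upd_size_def proj_q_def proj_cls_def proj_opt_def fun_eq_iff)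

lemma diamond_det_greedy_policy_proj:
  assumes adapted: "adapted_policy diamond_V diamond_E Sd id (\<lambda>_. 0) (det_kernel \<phi>)"
    and greedy: "greedy_policy diamond_V diamond_E Sd id (det_kernel \<phi>)"
    and "q \<in> Q_gre diamond_V diamond_E" and "i \<in> diamond_V"
  shows "proj_opt (\<phi> q i) = phi_gre_K3 (proj_q q) (proj_cls i)"
proof -
  have "finite diamond_V" by (simp add: diamond_V_def)
  with assms have "q \<in> Sd"
    using Q_gre_subset_det_greedy_states diamond_loop_free by blast
  with assms show ?thesis
    using det_greedy_policy_step diamond_greedy_match_proj by blast
qed

lemma diamond_greedy_policy_infsum_proj:
  assumes adapted: "adapted_policy diamond_V diamond_E S sz e \<Phi>"
    and greedy: "greedy_policy diamond_V diamond_E S sz \<Phi>"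
    and "s \<in> S" and "i \<in> diamond_V"
  shows "infsum (\<lambda>s'. \<Sum>j\<in>{j \<in> insert None (Some ` diamond_V).
           proj_opt j = phi_gre_K3 (proj_q (sz s)) (proj_cls i)}. \<Phi> s i j s') S = 1"
proof (rule adapted_policy_infsum_restricted[OF adapted _ \<open>s \<in> S\<close> \<open>i \<in> diamond_V\<close>])
  show "finite diamond_V" by (simp add: diamond_V_def)
  fix j s' assume mismatch: "proj_opt j \<noteq> phi_gre_K3 (proj_q (sz s)) (proj_cls i)"
  have "sz s \<in> Q_gre diamond_V diamond_E"
    using adapted_greedy_policy_sizes_Q_gre[OF adapted greedy diamond_loop_free \<open>s \<in> S\<close>] .
  then have "\<not> \<Phi> s i j s' > 0"
    using adapted_greedy_policy_step[OF adapted greedy \<open>s \<in> S\<close> \<open>i \<in> diamond_V\<close>]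
      diamond_greedy_match_proj \<open>i \<in> diamond_V\<close> mismatch by blast
  moreover have "\<Phi> s i j s' \<ge> 0"
    using adapted \<open>s \<in> S\<close> \<open>i \<in> diamond_V\<close> unfolding adapted_policy_def by blast
  ultimately show "\<Phi> s i j s' = 0" by simp
qed

lemma diamond_greedy_policy_queue_proj:
  assumes adapted: "adapted_policy diamond_V diamond_E S sz e \<Phi>"
    and greedy: "greedy_policy diamond_V diamond_E S sz \<Phi>"
    and arrivals: "\<And>t. I t \<in> diamond_V" and start: "st 0 = e"
    and path: "\<And>t. \<Phi> (st t) (I t) (jt t) (st (Suc t)) > 0"
  shows "proj_q (sz (st t)) = queue_gre_K3 (\<lambda>t. proj_cls (I t)) t"
proof -
  have "e \<in> S" and empty: "sz e = (\<lambda>_. 0)"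
    using adapted unfolding adapted_policy_def by blast+
  have states: "st t \<in> S" for t
    by (induction t) (use start \<open>e \<in> S\<close> adapted_greedy_policy_step[OF adapted greedy _ arrivals path] in auto)
  show ?thesis
  proof (induction t)
    case 0
    show ?case using start empty by (simp add: proj_q_def fun_eq_iff)
  next
    case (Suc t)
    have "sz (st t) \<in> Q_gre diamond_V diamond_E"
      using adapted_greedy_policy_sizes_Q_gre[OF adapted greedy diamond_loop_free states] .
    from adapted_greedy_policy_step[OF adapted greedy states arrivals path, of t]
    have next_size: "sz (st (Suc t)) = upd_size (sz (st t)) (I t) (jt t)"
      and match: "greedy_match diamond_E (sz (st t)) (I t) (jt t)" by auto
    have "proj_q (sz (st (Suc t))) = upd_size (proj_q (sz (st t))) (proj_cls (I t)) (proj_opt (jt t))"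
      unfolding next_size
      by (rule proj_q_upd_size[OF arrivals]) (use match in \<open>simp add: greedy_match_def\<close>)
    also have "proj_opt (jt t) = phi_gre_K3 (proj_q (sz (st t))) (proj_cls (I t))"
      using diamond_greedy_match_proj[OF \<open>sz (st t) \<in> _\<close> arrivals match] .
    finally show ?case using Suc.IH by simp
  qed
qed

theorem proposition6p6:
  fixes S :: "'s set" and sz :: "'s \<Rightarrow> nat \<Rightarrow> nat" and e :: 's
    and \<Phi> :: "'s \<Rightarrow> nat \<Rightarrow> nat option \<Rightarrow> 's \<Rightarrow> real"
  assumes adapted: "adapted_policy diamond_V diamond_E S sz e \<Phi>"
    and greedy: "greedy_policy diamond_V diamond_E S sz \<Phi>"
  shows
    \<comment> \<open>(i) deterministic size-based greedy policies adapted to D\<close>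
    "(\<forall>(Sd :: (nat \<Rightarrow> nat) set) (\<phi> :: (nat \<Rightarrow> nat) \<Rightarrow> nat \<Rightarrow> nat option).
        adapted_policy diamond_V diamond_E Sd id (\<lambda>_. 0) (det_kernel \<phi>) \<and>
        greedy_policy diamond_V diamond_E Sd id (det_kernel \<phi>) \<longrightarrow>
        (\<forall>q\<in>Q_gre diamond_V diamond_E. \<forall>i\<in>diamond_V.
            proj_opt (\<phi> q i) = phi_gre_K3 (proj_q q) (proj_cls i)))
     \<and>
    \<comment> \<open>(ii) general policies\<close>
     (\<forall>s\<in>S. \<forall>i\<in>diamond_V.
        infsum (\<lambda>s'. \<Sum>j\<in>{j \<in> insert None (Some ` diamond_V).
                           proj_opt j = phi_gre_K3 (proj_q (sz s)) (proj_cls i)}. \<Phi> s i j s') S = 1)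
     \<and>
    \<comment> \<open>(iii) queue-size processes along every realization of positive probability\<close>
     (\<forall>(I :: nat \<Rightarrow> nat) (st :: nat \<Rightarrow> 's) (jt :: nat \<Rightarrow> nat option).
        (\<forall>t. I t \<in> diamond_V) \<and> st 0 = e \<and>
        (\<forall>t. \<Phi> (st t) (I t) (jt t) (st (Suc t)) > 0) \<longrightarrow>
        (\<forall>t. proj_q (sz (st t)) = queue_gre_K3 (\<lambda>t. proj_cls (I t)) t))"
proof (intro conjI allI impI ballI)
  fix Sd :: "(nat \<Rightarrow> nat) set" and \<phi> q i
  assume "adapted_policy diamond_V diamond_E Sd id (\<lambda>_. 0) (det_kernel \<phi>) \<and>
    greedy_policy diamond_V diamond_E Sd id (det_kernel \<phi>)"
    and "q \<in> Q_gre diamond_V diamond_E" and "i \<in> diamond_V"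
  then show "proj_opt (\<phi> q i) = phi_gre_K3 (proj_q q) (proj_cls i)"
    using diamond_det_greedy_policy_proj by blast
next
  fix s i assume "s \<in> S" and "i \<in> diamond_V"
  then show "infsum (\<lambda>s'. \<Sum>j\<in>{j \<in> insert None (Some ` diamond_V).
      proj_opt j = phi_gre_K3 (proj_q (sz s)) (proj_cls i)}. \<Phi> s i j s') S = 1"
    by (rule diamond_greedy_policy_infsum_proj[OF adapted greedy])
next
  fix I st jt t
  assume "(\<forall>t. I t \<in> diamond_V) \<and> st 0 = e \<and> (\<forall>t. \<Phi> (st t) (I t) (jt t) (st (Suc t)) > 0)"
  then show "proj_q (sz (st t)) = queue_gre_K3 (\<lambda>t. proj_cls (I t)) t"
    using diamond_greedy_policy_queue_proj[OF adapted greedy] by blast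
qed

end
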